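(* Let $A_1=(1,0,-1)^8$ and $A_2=(0,1,-1,-1,3,-2,-2,5,-3,-3,7,-4,-4,9,-5,-5,11,-6,-6,13,-7,-7,15,-8)$ in $\mathbb{Z}^{24}$, let $a_1,a_2$ be integers, $A=a_1A_1+a_2A_2$, and let $m$ be an odd positive integer with $\gcd(a_1,a_2,m)=1$ and $\gcd(a_2,m)\in\{1,3\}$. Then the triangle $\nabla\big(\mathrm{IAP}(\pi_m(A),\pi_m(A)X_{24})[3\lambda m]\big)$ is balanced in $\mathbb{Z}/m\mathbb{Z}$ for every non-negative integer $\lambda$.
   Context: $\pi_m$ is reduction mod $m$; tuples are row vectors; $X_{24}=(\delta_{r,s}+\delta_{r,25-s})_{1\le r,s\le24}$. For $24$-tuples $A=(a_0,\dots,a_{23})$, $D=(d_0,\dots,d_{23})$, $\mathrm{IAP}(A,D)=(u_j)_{j\in\mathbb{Z}}$ with $u_{24q+r}=a_r+qd_r$. For a sequence $S=(u_j)_{j\in\mathbb{Z}}$, $S[n]=(u_0,\dots,u_{n-1})$. For a finite sequence $(u_0,\dots,u_{n-1})$, the triangle $\nabla(u_0,\dots,u_{n-1})$ is $(a_{i,j})_{i,j\ge0,i+j<n}$ with $a_{0,j}=u_j$ and $a_{i,j}=-a_{i-1,j}-a_{i-1,j+1}$ for $i\ge1$; it is balanced if every element of $\mathbb{Z}/m\mathbb{Z}$ occurs the same number of times among its entries. *)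

theory Defs
  imports Main
begin

text \<open>24-tuples are represented as functions on the indices 0..23 (0-based).\<close>

definition A1 :: "nat \<Rightarrow> int" where
  "A1 r = [1, 0, -1] ! (r mod 3)"

definition A2 :: "nat \<Rightarrow> int" where
  "A2 r = [0, 1, -1, -1, 3, -2, -2, 5, -3, -3, 7, -4, -4, 9, -5, -5, 11, -6, -6, 13, -7, -7, 15, -8] ! r"

definition red :: "int \<Rightarrow> (nat \<Rightarrow> int) \<Rightarrow> nat \<Rightarrow> int" where
  "red m v r = v r mod m"

text \<open>row vector times X_24 (0-based): (v X)_s = v_s + v_(23-s); computed mod m\<close>
definition timesX :: "int \<Rightarrow> (nat \<Rightarrow> int) \<Rightarrow> nat \<Rightarrow> int" where
  "timesX m v s = (v s + v (23 - s)) mod m"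

text \<open>IAP(A,D): u_(24q+r) = a_r + q d_r (only non-negative indices are needed for S[n])\<close>
definition IAP :: "(nat \<Rightarrow> int) \<Rightarrow> (nat \<Rightarrow> int) \<Rightarrow> nat \<Rightarrow> int" where
  "IAP a d j = a (j mod 24) + int (j div 24) * d (j mod 24)"

text \<open>triangle entries a_(i,j), computed over the integers (reduction mod m commutes)\<close>
fun tri :: "(nat \<Rightarrow> int) \<Rightarrow> nat \<Rightarrow> nat \<Rightarrow> int" where
  "tri u 0 j = u j"
| "tri u (Suc i) j = - tri u i j - tri u i (Suc j)"

definition balanced :: "int \<Rightarrow> (nat \<Rightarrow> int) \<Rightarrow> nat \<Rightarrow> bool" where
  "balanced m u n = (\<forall>x\<in>{0..<m}. \<forall>y\<in>{0..<m}.
     card {(i, j). i + j < n \<and> tri u i j mod m = x}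
   = card {(i, j). i + j < n \<and> tri u i j mod m = y})"

end

theory Submission
  imports Defs "HOL-Number_Theory.Cong"
begin

text \<open>
  Over the integers the triangle is linear in its first row, and modulo \<open>m\<close> the sequence
  \<open>IAP(A, A X\<^sub>2\<^sub>4)\<close> is the first row of an explicit array \<open>tri_closed a1 a2\<close> satisfying
  the triangle recurrence: exactly one of the linear forms \<open>i - j\<close>, \<open>i + 2j + 1\<close>,
  \<open>-1 - 2i - j\<close> is divisible by 3, and the entry at \<open>(i, j)\<close> is \<open>a1\<close>, \<open>0\<close> or \<open>-a1\<close>
  plus \<open>a2\<close> times a third of that form.

  On the triangle of size \<open>n = 3\<lambda>m\<close> the rotation \<open>(i, j) \<mapsto> (n - 1 - i - j, i)\<close>
  permutes the three forms up to multiples of \<open>n\<close>, so it suffices to count by \<open>i - j\<close>.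
  This difference is equidistributed modulo \<open>3m\<close>: twice the triangle is the square
  \<open>[0, n)\<^sup>2\<close> plus its anti-diagonal (reflect the part above the anti-diagonal), and both
  are equidistributed because \<open>3m\<close> is odd and divides \<open>n\<close>. Hence every residue \<open>x\<close>
  occurs \<open>K\<close> times the number of solutions of \<open>a1 + a2 r \<equiv> x\<close>, \<open>a2 r \<equiv> x\<close>,
  \<open>-a1 + a2 r \<equiv> x (mod m)\<close>, and the conditions on the gcds make this number 3.
\<close>

section \<open>Counting solutions of congruences\<close>

lemma cong_window_eq_singleton:
  fixes b k0 M :: int
  assumes "M > 0"
  shows "{k \<in> {b..<b + M}. [k = k0] (mod M)} = {b + (k0 - b) mod M}"
proof (intro set_eqI iffI)
  fix k
  assume "k \<in> {k \<in> {b..<b + M}. [k = k0] (mod M)}"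
  then have k: "b \<le> k" "k < b + M" "[k = k0] (mod M)"
    by auto
  have "[k - b = k0 - b] (mod M)"
    using k(3) by (intro cong_diff cong_refl)
  also have "[k0 - b = (k0 - b) mod M] (mod M)"
    by (simp add: cong_def)
  finally have "k - b = (k0 - b) mod M"
    using cong_less_imp_eq_int[of "k - b" M "(k0 - b) mod M"] assms k(1,2) by simp
  then show "k \<in> {b + (k0 - b) mod M}" by simp
next
  fix k
  assume "k \<in> {b + (k0 - b) mod M}"
  then show "k \<in> {k \<in> {b..<b + M}. [k = k0] (mod M)}"
    using assms by (simp add: cong_def mod_simps)
qed

lemma card_cong_solutions_coprime:
  fixes u v M :: int
  assumes "M > 0" and "coprime u M"
  shows "card {k \<in> {0..<int l * M}. [u * k = v] (mod M)} = l"
proof -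
  obtain s where "[u * s = 1] (mod M)"
    using cong_solve_coprime_int assms(2) by blast
  then have "[u * (s * v) = v] (mod M)"
    using cong_scalar_right[of "u * s" 1 M v] by (simp add: mult.assoc)
  then have solutions: "[u * k = v] (mod M) \<longleftrightarrow> [k = s * v] (mod M)" for k
    using cong_mult_lcancel[OF assms(2)] by (metis cong_sym cong_trans)
  show ?thesis
  proof (induction l)
    case 0
    then show ?case by simp
  next
    case (Suc l)
    have "int (Suc l) * M = int l * M + M"
      by (simp add: distrib_right)
    then have "{0..<int (Suc l) * M} = {0..<int l * M} \<union> {int l * M..<int l * M + M}"
      using ivl_disj_un_two(3)[of 0 "int l * M" "int l * M + M"] assms(1) by simp
    then have split: "{k \<in> {0..<int (Suc l) * M}. [u * k = v] (mod M)}
        = {k \<in> {0..<int l * M}. [u * k = v] (mod M)} \<union> {k \<in> {int l * M..<int l * M + M}. [k = s * v] (mod M)}"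
      by (auto simp: solutions)
    have "card {k \<in> {int l * M..<int l * M + M}. [k = s * v] (mod M)} = 1"
      using cong_window_eq_singleton[OF assms(1)] by simp
    moreover have "finite {k \<in> {a..<b}. P k}" for a b :: int and P
      by (rule finite_subset[of _ "{a..<b}"]) auto
    ultimately show ?case
      unfolding split using Suc.IH by (subst card_Un_disjoint) auto
  qed
qed

lemma card_cong_solutions_coprime_nat:
  fixes u v M :: int
  assumes "M > 0" and "coprime u M"
  shows "card {k. k < l * nat M \<and> [u * int k = v] (mod M)} = l"
proof -
  have "{0..<int l * M} = int ` {..<l * nat M}"
    using image_atLeastZeroLessThan_int[of "int l * M"] assms(1) by (simp add: nat_mult_distrib)
  then have "{k \<in> {0..<int l * M}. [u * k = v] (mod M)} = int ` {k. k < l * nat M \<and> [u * int k = v] (mod M)}"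
    by auto
  then show ?thesis
    using card_cong_solutions_coprime[OF assms, of l v] by (simp add: card_image)
qed

lemma card_linear_cong_solutions:
  fixes a b m :: int
  assumes "m > 0"
  shows "card {r \<in> {0..<m}. [a * r = b] (mod m)} = (if gcd a m dvd b then nat (gcd a m) else 0)"
proof -
  define g where "g = gcd a m"
  have "g > 0" using assms by (simp add: g_def)
  obtain u m' where a: "a = g * u" and m: "m = g * m'"
    unfolding g_def by (meson gcd_dvd1 gcd_dvd2 dvdE)
  have "m' > 0" using assms \<open>g > 0\<close> m by (simp add: zero_less_mult_iff)
  have "gcd (g * u) (g * m') = g"
    using g_def unfolding a[symmetric] m[symmetric] by simp
  then have "g * gcd u m' = g * 1"
    using gcd_mult_distrib_int[of g u m'] \<open>g > 0\<close> by simp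
  then have "coprime u m'"
    using \<open>g > 0\<close> by (simp add: coprime_iff_gcd_eq_1)
  show ?thesis
  proof (cases "g dvd b")
    case True
    then obtain s where b: "b = g * s" ..
    have "g * u * r - g * s = g * (u * r - s)" for r
      by (simp add: algebra_simps)
    then have "[a * r = b] (mod m) \<longleftrightarrow> [u * r = s] (mod m')" for r
      using \<open>g > 0\<close> unfolding a b m cong_iff_dvd_diff by simp
    then have "{r \<in> {0..<m}. [a * r = b] (mod m)} = {r \<in> {0..<int (nat g) * m'}. [u * r = s] (mod m')}"
      using \<open>g > 0\<close> m by simp
    then show ?thesis
      using card_cong_solutions_coprime[OF \<open>m' > 0\<close> \<open>coprime u m'\<close>, of "nat g" s] True \<open>g > 0\<close>
      by (simp add: g_def[symmetric])
  next
    case False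
    have "\<not> [a * r = b] (mod m)" for r
    proof
      assume "[a * r = b] (mod m)"
      then have "g dvd a * r - b"
        unfolding cong_iff_dvd_diff m using dvd_mult_left by blast
      with a have "g dvd a * r" and "g dvd a * r - b"
        by simp_all
      then have "g dvd a * r - (a * r - b)"
        by (rule dvd_diff)
      with False show False by simp
    qed
    then show ?thesis using False by (simp add: g_def[symmetric])
  qed
qed

lemma cong_mult_modulus_iff:
  fixes L k r m :: int
  assumes "k \<noteq> 0"
  shows "[L = k * r] (mod k * m) \<longleftrightarrow> k dvd L \<and> [L div k = r] (mod m)"
proof
  assume "[L = k * r] (mod k * m)"
  then have "k * m dvd L - k * r"
    by (simp add: cong_iff_dvd_diff)
  moreover from this have "k dvd (L - k * r) + k * r"
    using dvd_mult_left by (intro dvd_add) auto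
  then obtain q where L: "L = k * q"
    by auto
  ultimately have "k * m dvd k * (q - r)"
    by (simp add: right_diff_distrib)
  with L assms show "k dvd L \<and> [L div k = r] (mod m)"
    by (simp add: cong_iff_dvd_diff)
next
  assume "k dvd L \<and> [L div k = r] (mod m)"
  then obtain q where L: "L = k * q" and "m dvd q - r"
    using assms by (auto simp: cong_iff_dvd_diff)
  then have "k * m dvd k * (q - r)"
    by (intro mult_dvd_mono) simp_all
  with L show "[L = k * r] (mod k * m)"
    by (simp add: cong_iff_dvd_diff right_diff_distrib)
qed

lemma dvd_3_div_mod_shift:
  fixes L c a t m :: int
  shows "3 dvd L + 3 * (t * m) \<and> (c + a * ((L + 3 * (t * m)) div 3)) mod m = x
     \<longleftrightarrow> 3 dvd L \<and> (c + a * (L div 3)) mod m = x"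
proof -
  have "3 dvd L + 3 * (t * m) \<longleftrightarrow> 3 dvd L"
    by presburger
  moreover have "(L + 3 * (t * m)) div 3 = L div 3 + t * m"
    by simp
  moreover have "c + a * (L div 3 + t * m) = (c + a * (L div 3)) + (a * t) * m"
    by (simp add: algebra_simps)
  then have "(c + a * (L div 3 + t * m)) mod m = (c + a * (L div 3)) mod m"
    by (simp only: mod_mult_self1)
  ultimately show ?thesis
    by (simp only:)
qed

lemma card_filter_bij_betw:
  assumes "bij_betw f A A"
  shows "card {x \<in> A. P (f x)} = card {x \<in> A. P x}"
proof -
  have onto: "f ` A = A"
    using assms by (rule bij_betw_imp_surj_on)
  have "f ` {x \<in> A. P (f x)} = {x \<in> A. P x}"
  proof
    show "f ` {x \<in> A. P (f x)} \<subseteq> {x \<in> A. P x}"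
      using onto by auto
    show "{x \<in> A. P x} \<subseteq> f ` {x \<in> A. P (f x)}"
    proof
      fix y
      assume y: "y \<in> {x \<in> A. P x}"
      then obtain x where "x \<in> A" "y = f x"
        using onto by (metis (no_types, lifting) imageE mem_Collect_eq)
      with y show "y \<in> f ` {x \<in> A. P (f x)}" by auto
    qed
  qed
  moreover have "inj_on f {x \<in> A. P (f x)}"
    using bij_betw_imp_inj_on[OF assms] by (rule inj_on_subset) auto
  ultimately show ?thesis
    using card_image by fastforce
qed

lemma card_filter_uniform_fibres:
  assumes "finite A" and "finite B" and "f ` A \<subseteq> B"
    and "\<And>b. b \<in> B \<Longrightarrow> card {x \<in> A. f x = b} = K"
  shows "card {x \<in> A. P (f x)} = K * card {b \<in> B. P b}"
proof -
  have "card {x \<in> A. P (f x)} = card (\<Union>b \<in> {b \<in> B. P b}. {x \<in> A. f x = b})"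
    using assms(3) by (intro arg_cong[where f = card]) auto
  also have "\<dots> = (\<Sum>b \<in> {b \<in> B. P b}. card {x \<in> A. f x = b})"
    using assms(1,2) by (intro card_UN_disjoint) auto
  also have "\<dots> = K * card {b \<in> B. P b}"
    using assms(4) by simp
  finally show ?thesis .
qed

section \<open>A closed form of the triangle\<close>

lemma tri_eqI:
  assumes "\<And>i j. F (Suc i) j = - F i j - F i (Suc j)"
  shows "tri (F 0) i j = F i j"
  by (induction i arbitrary: j) (simp_all add: assms)

lemma tri_cong:
  assumes "\<And>j. [u j = v j] (mod m)"
  shows "[tri u i j = tri v i j] (mod m)"
  by (induction i arbitrary: j) (simp_all add: assms cong_diff cong_minus_minus_iff)

lemma IAP_cong:
  assumes "\<And>r. [a r = a' r] (mod m)" and "\<And>r. [d r = d' r] (mod m)"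
  shows "[IAP a d j = IAP a' d' j] (mod m)"
  unfolding IAP_def by (intro cong_add cong_mult cong_refl assms)

definition form0 :: "nat \<Rightarrow> nat \<Rightarrow> int" where
  "form0 i j = int i - int j"

definition form1 :: "nat \<Rightarrow> nat \<Rightarrow> int" where
  "form1 i j = int i + 2 * int j + 1"

definition form2 :: "nat \<Rightarrow> nat \<Rightarrow> int" where
  "form2 i j = - 1 - 2 * int i - int j"

lemma dvd_3_forms:
  "3 dvd form0 i j \<longleftrightarrow> form0 i j mod 3 = 0"
  "3 dvd form1 i j \<longleftrightarrow> form0 i j mod 3 = 2"
  "3 dvd form2 i j \<longleftrightarrow> form0 i j mod 3 = 1"
  unfolding form0_def form1_def form2_def by presburger+

definition tri_closed :: "int \<Rightarrow> int \<Rightarrow> nat \<Rightarrow> nat \<Rightarrow> int" where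
  "tri_closed a1 a2 i j =
     (if 3 dvd form0 i j then a1 + a2 * (form0 i j div 3)
      else if 3 dvd form1 i j then a2 * (form1 i j div 3)
      else - a1 + a2 * (form2 i j div 3))"

lemma tri_closed_Suc:
  "tri_closed a1 a2 (Suc i) j = - tri_closed a1 a2 i j - tri_closed a1 a2 i (Suc j)"
proof -
  have "3 dvd form0 i j \<or> 3 dvd form1 i j \<or> 3 dvd form0 i (Suc j)"
    unfolding form0_def form1_def by presburger
  then consider k where "form0 i j = 3 * k" | k where "form1 i j = 3 * k"
    | k where "form0 i (Suc j) = 3 * k"
    by blast
  then show ?thesis
  proof cases
    case (1 k)
    then have "\<not> 3 dvd form0 (Suc i) j" "\<not> 3 dvd form1 (Suc i) j" "\<not> 3 dvd form0 i (Suc j)"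
      unfolding form0_def form1_def by presburger+
    moreover from 1 have "form2 (Suc i) j = 3 * (- 1 - 2 * k - int j)"
      "form1 i (Suc j) = 3 * (k + int j + 1)"
      by (simp_all add: form0_def form1_def form2_def)
    ultimately show ?thesis unfolding tri_closed_def 1 by simp (simp add: algebra_simps)
  next
    case (2 k)
    then have "\<not> 3 dvd form0 i j" "\<not> 3 dvd form0 i (Suc j)" "\<not> 3 dvd form1 i (Suc j)"
      unfolding form0_def form1_def by presburger+
    moreover from 2 have "form0 (Suc i) j = 3 * (k - int j)" "form2 i (Suc j) = 3 * (int j - 2 * k)"
      by (simp_all add: form0_def form1_def form2_def)
    ultimately show ?thesis unfolding tri_closed_def 2 by simp (simp add: algebra_simps)
  next
    case (3 k)
    then have "\<not> 3 dvd form0 i j" "\<not> 3 dvd form1 i j" "\<not> 3 dvd form0 (Suc i) j"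
      unfolding form0_def form1_def by presburger+
    moreover from 3 have "form2 i j = 3 * (k - int i)" "form1 (Suc i) j = 3 * (int i - 2 * k)"
      by (simp_all add: form0_def form1_def form2_def)
    ultimately show ?thesis unfolding tri_closed_def 3 by simp (simp add: algebra_simps)
  qed
qed

lemma tri_closed_mod_eq_iff:
  "tri_closed a1 a2 i j mod m = x \<longleftrightarrow>
     3 dvd form0 i j \<and> (a1 + a2 * (form0 i j div 3)) mod m = x \<or>
     3 dvd form1 i j \<and> (0 + a2 * (form1 i j div 3)) mod m = x \<or>
     3 dvd form2 i j \<and> (- a1 + a2 * (form2 i j div 3)) mod m = x"
proof -
  have "form0 i j mod 3 = 0 \<or> form0 i j mod 3 = 1 \<or> form0 i j mod 3 = 2"
    by presburger
  then show ?thesis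
    unfolding tri_closed_def by (elim disjE) (simp_all add: dvd_3_forms)
qed

lemma tri_closed_row0:
  "tri_closed a1 a2 0 (3 * k) = a1 - a2 * int k"
  "tri_closed a1 a2 0 (3 * k + 1) = a2 * (2 * int k + 1)"
  "tri_closed a1 a2 0 (3 * k + 2) = - a1 - a2 * (int k + 1)"
proof -
  have "3 dvd form0 0 (3 * k)" "form0 0 (3 * k) div 3 = - int k"
    "\<not> 3 dvd form0 0 (3 * k + 1)" "3 dvd form1 0 (3 * k + 1)"
    "form1 0 (3 * k + 1) div 3 = 2 * int k + 1"
    "\<not> 3 dvd form0 0 (3 * k + 2)" "\<not> 3 dvd form1 0 (3 * k + 2)"
    "form2 0 (3 * k + 2) div 3 = - int k - 1"
    unfolding form0_def form1_def form2_def by presburger+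
  then show "tri_closed a1 a2 0 (3 * k) = a1 - a2 * int k"
    "tri_closed a1 a2 0 (3 * k + 1) = a2 * (2 * int k + 1)"
    "tri_closed a1 a2 0 (3 * k + 2) = - a1 - a2 * (int k + 1)"
    unfolding tri_closed_def by (simp_all only: if_True if_False) (simp_all add: algebra_simps)
qed

lemma A1_values: "A1 (3 * p) = 1" "A1 (3 * p + 1) = 0" "A1 (3 * p + 2) = - 1"
  by (simp_all add: A1_def mod_Suc)

lemma A2_values:
  assumes "p < 8"
  shows "A2 (3 * p) = - int p" "A2 (3 * p + 1) = 2 * int p + 1" "A2 (3 * p + 2) = - int p - 1"
  using assms unfolding A2_def by (auto simp: less_Suc_eq numeral_eq_Suc)

lemma tri_closed_row0_eq_IAP:
  fixes a1 a2 :: int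
  defines "A \<equiv> \<lambda>r. a1 * A1 r + a2 * A2 r"
  shows "tri_closed a1 a2 0 j = IAP A (\<lambda>s. A s + A (23 - s)) j"
proof -
  define q p c where "q = j div 24" and "p = j mod 24 div 3" and "c = j mod 3"
  have "c < 3" unfolding c_def by simp
  have p: "p < 8" unfolding p_def by linarith
  have r: "j mod 24 = 3 * p + c"
    using div_mult_mod_eq[of "j mod 24" 3] unfolding p_def c_def by (simp add: mod_mod_cancel)
  have "j = 3 * (8 * q + p) + c"
    using div_mult_mod_eq[of j 24] unfolding r q_def by (simp add: algebra_simps)
  then have row: "tri_closed a1 a2 0 j = tri_closed a1 a2 0 (3 * (8 * q + p) + c)"
    by (rule arg_cong)
  have IAP_j: "IAP A (\<lambda>s. A s + A (23 - s)) j
      = A (3 * p + c) + int q * (A (3 * p + c) + A (23 - (3 * p + c)))"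
    unfolding IAP_def r q_def ..
  have p': "7 - p < 8" "int (7 - p) = 7 - int p"
    using p by simp_all
  note row0_values = A_def tri_closed_row0 A1_values A2_values[OF p] A2_values[OF p'(1)] p'(2)
  from \<open>c < 3\<close> consider "c = 0" | "c = 1" | "c = 2" by arith
  then show ?thesis
  proof cases
    case 1
    with p have "23 - 3 * p = 3 * (7 - p) + 2" by simp
    then show ?thesis unfolding row IAP_j 1 add_0_right by (simp only: row0_values) (simp add: algebra_simps)
  next
    case 2
    with p have "23 - (3 * p + 1) = 3 * (7 - p) + 1" by simp
    then show ?thesis unfolding row IAP_j 2 by (simp only: row0_values) (simp add: algebra_simps)
  next
    case 3
    with p have "23 - (3 * p + 2) = 3 * (7 - p)" by simp
    then show ?thesis unfolding row IAP_j 3 by (simp only: row0_values) (simp add: algebra_simps)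
  qed
qed

lemma tri_IAP_cong_tri_closed:
  fixes a1 a2 m :: int
  defines "A \<equiv> \<lambda>r. a1 * A1 r + a2 * A2 r"
  shows "[tri (IAP (red m A) (timesX m (red m A))) i j = tri_closed a1 a2 i j] (mod m)"
proof -
  have row0: "tri_closed a1 a2 0 = IAP A (\<lambda>s. A s + A (23 - s))"
    unfolding A_def by (rule ext) (rule tri_closed_row0_eq_IAP)
  have "[IAP (red m A) (timesX m (red m A)) k = IAP A (\<lambda>s. A s + A (23 - s)) k] (mod m)" for k
    by (rule IAP_cong) (simp_all add: red_def timesX_def cong_def mod_simps)
  then have "[tri (IAP (red m A) (timesX m (red m A))) i j = tri (tri_closed a1 a2 0) i j] (mod m)"
    unfolding row0 by (rule tri_cong)
  also have "tri (tri_closed a1 a2 0) i j = tri_closed a1 a2 i j"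
    by (rule tri_eqI) (rule tri_closed_Suc)
  finally show ?thesis .
qed

section \<open>Residues on the triangle\<close>

lemma finite_triangle: "finite {(i, j). i + j < (n::nat) \<and> P i j}"
proof (rule finite_subset)
  show "{(i, j). i + j < n \<and> P i j} \<subseteq> {..<n} \<times> {..<n}"
    by auto
qed simp

lemma card_triangle_Suc:
  "card {(i, j). i + j < Suc n \<and> P i j}
     = card {(i, j). i + j < n \<and> P i j} + card {i. i \<le> n \<and> P i (n - i)}"
proof -
  have split: "{(i, j). i + j < Suc n \<and> P i j}
      = {(i, j). i + j < n \<and> P i j} \<union> (\<lambda>i. (i, n - i)) ` {i. i \<le> n \<and> P i (n - i)}"
    by (auto simp: image_iff less_Suc_eq)
  have "inj_on (\<lambda>i. (i, n - i)) {i. i \<le> n \<and> P i (n - i)}"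
    by (rule inj_onI) simp
  then show ?thesis
    unfolding split by (subst card_Un_disjoint) (auto simp: finite_triangle card_image)
qed

lemma card_square_diff_split:
  "card {(i, j). i < Suc n \<and> j < Suc n \<and> P (int i - int j)}
     = card {(i, j). i + j < Suc n \<and> P (int i - int j)} + card {(i, j). i + j < n \<and> P (int i - int j)}"
proof -
  let ?T = "\<lambda>n. {(i, j). i + j < n \<and> P (int i - int j)}"
  let ?reflect = "\<lambda>(i, j). (n - j, n - i)"
  have split: "{(i, j). i < Suc n \<and> j < Suc n \<and> P (int i - int j)} = ?T (Suc n) \<union> ?reflect ` ?T n"
  proof (intro equalityI subsetI)
    fix p
    assume "p \<in> {(i, j). i < Suc n \<and> j < Suc n \<and> P (int i - int j)}"
    then obtain i j where p: "p = (i, j)" and ij: "i \<le> n" "j \<le> n" and P: "P (int i - int j)"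
      by auto
    show "p \<in> ?T (Suc n) \<union> ?reflect ` ?T n"
    proof (cases "i + j \<le> n")
      case True
      with p P show ?thesis by simp
    next
      case False
      with ij P have "(n - j, n - i) \<in> ?T n"
        by (simp add: of_nat_diff)
      moreover from p ij have "p = ?reflect (n - j, n - i)"
        by simp
      ultimately show ?thesis
        by (intro UnI2 image_eqI)
    qed
  next
    fix p
    assume "p \<in> ?T (Suc n) \<union> ?reflect ` ?T n"
    then show "p \<in> {(i, j). i < Suc n \<and> j < Suc n \<and> P (int i - int j)}"
    proof
      assume "p \<in> ?reflect ` ?T n"
      then obtain i j where "p = (n - j, n - i)" "i + j < n" "P (int i - int j)"
        by auto
      then show ?thesis
        by (auto simp: of_nat_diff)
    qed auto
  qed
  have "inj_on ?reflect (?T n)"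
  proof (rule inj_onI)
    fix p q
    assume "p \<in> ?T n" "q \<in> ?T n" "?reflect p = ?reflect q"
    then show "p = q"
      by (cases p, cases q) auto
  qed
  moreover have "?T (Suc n) \<inter> ?reflect ` ?T n = {}"
    by auto
  ultimately show ?thesis
    unfolding split by (simp add: card_Un_disjoint finite_triangle card_image)
qed

lemma card_triangle_diff_cong:
  fixes M d :: int
  assumes "M > 0" and "odd M"
  shows "2 * card {(i, j). i + j < l * nat M \<and> [int i - int j = d] (mod M)} = l * (l * nat M + 1)"
proof (cases "l = 0")
  case True
  then show ?thesis by simp
next
  case False
  with assms(1) obtain n where n: "l * nat M = Suc n"
    by (metis gr0_implies_Suc mult_pos_pos zero_less_nat_eq bot_nat_0.not_eq_extremum)
  have row: "[int i - int j = d] (mod M) \<longleftrightarrow> [- 1 * int j = d - int i] (mod M)" for i j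
    unfolding cong_iff_dvd_diff by (simp add: algebra_simps)
  have "{(i, j). i < Suc n \<and> j < Suc n \<and> [int i - int j = d] (mod M)}
      = Sigma {..<Suc n} (\<lambda>i. {j. j < l * nat M \<and> [- 1 * int j = d - int i] (mod M)})"
    unfolding n row by auto
  then have square: "card {(i, j). i < Suc n \<and> j < Suc n \<and> [int i - int j = d] (mod M)} = Suc n * l"
    using card_cong_solutions_coprime_nat[OF assms(1), of "- 1"] by simp
  have diag: "[int i - int (n - i) = d] (mod M) \<longleftrightarrow> [2 * int i = d + int n] (mod M)" if "i \<le> n" for i
    using that unfolding cong_iff_dvd_diff by (simp add: of_nat_diff algebra_simps)
  have "{i. i \<le> n \<and> [int i - int (n - i) = d] (mod M)} = {i. i < l * nat M \<and> [2 * int i = d + int n] (mod M)}"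
    unfolding n using diag by auto
  then have diagonal: "card {i. i \<le> n \<and> [int i - int (n - i) = d] (mod M)} = l"
    using card_cong_solutions_coprime_nat[OF assms(1), of 2] assms(2) by simp
  have "2 * card {(i, j). i + j < Suc n \<and> [int i - int j = d] (mod M)} = Suc n * l + l"
    using card_square_diff_split[of n "\<lambda>x. [x = d] (mod M)"]
      card_triangle_Suc[of n "\<lambda>i j. [int i - int j = d] (mod M)"] square diagonal
    by simp
  then show ?thesis
    unfolding n by simp
qed

lemma card_triangle_rotate:
  "card {(i, j). i + j < n \<and> Q (n - Suc (i + j)) i} = card {(i, j). i + j < n \<and> Q i j}"
proof -
  have "bij_betw (\<lambda>(i, j). (n - Suc (i + j), i)) {(i, j). i + j < n} {(i, j). i + j < n}"
    by (rule bij_betw_byWitness[where f' = "\<lambda>(i, j). (j, n - Suc (i + j))"]) auto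
  from card_filter_bij_betw[OF this, of "\<lambda>(i, j). Q i j"] show ?thesis
    by (simp add: split_def)
qed

lemma card_triangle_form_rotate:
  assumes "\<And>x. P (x + int n) = P x"
  shows "card {(i, j). i + j < n \<and> P (form1 i j)} = card {(i, j). i + j < n \<and> P (form0 i j)}"
    and "card {(i, j). i + j < n \<and> P (form2 i j)} = card {(i, j). i + j < n \<and> P (form0 i j)}"
proof -
  have rotated: "form1 (n - Suc (i + j)) i = form0 i j + int n"
    "form2 (n - Suc (i + j)) i = form1 i j - 2 * int n" if "i + j < n" for i j
    using that by (simp_all add: form0_def form1_def form2_def of_nat_diff)
  have "P (x - int n) = P x" for x
    using assms[of "x - int n"] by simp
  moreover have "P (x - 2 * int n) = P (x - int n)" for x
    using assms[of "x - 2 * int n"] by (simp add: algebra_simps)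
  ultimately have periodic2: "P (x - 2 * int n) = P x" for x
    by simp
  have "{(i, j). i + j < n \<and> P (form0 i j)} = {(i, j). i + j < n \<and> P (form1 (n - Suc (i + j)) i)}"
    using rotated assms by auto
  then show form1: "card {(i, j). i + j < n \<and> P (form1 i j)} = card {(i, j). i + j < n \<and> P (form0 i j)}"
    using card_triangle_rotate[of n "\<lambda>i j. P (form1 i j)"] by simp
  have "{(i, j). i + j < n \<and> P (form1 i j)} = {(i, j). i + j < n \<and> P (form2 (n - Suc (i + j)) i)}"
    using rotated periodic2 by auto
  then show "card {(i, j). i + j < n \<and> P (form2 i j)} = card {(i, j). i + j < n \<and> P (form0 i j)}"
    using card_triangle_rotate[of n "\<lambda>i j. P (form2 i j)"] form1 by simp
qed

lemma card_triangle_form0_class: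
  fixes m c a2 x :: int and lam :: nat
  assumes "m > 0" and "odd m"
  defines "n \<equiv> 3 * lam * nat m"
  shows "card {(i, j). i + j < n \<and> 3 dvd form0 i j \<and> (c + a2 * (form0 i j div 3)) mod m = x}
       = card {(i, j). i + j < n \<and> [form0 i j = 0] (mod 3 * m)} * card {r \<in> {0..<m}. (c + a2 * r) mod m = x}"
proof -
  let ?A = "{(i, j). i + j < n \<and> 3 dvd form0 i j}"
  let ?f = "\<lambda>(i, j). form0 i j div 3 mod m"
  have "n = lam * nat (3 * m)"
    using assms(1) by (simp add: n_def nat_mult_distrib)
  then have equidistributed:
    "2 * card {(i, j). i + j < n \<and> [form0 i j = e] (mod 3 * m)} = lam * (lam * nat (3 * m) + 1)" for e
    using card_triangle_diff_cong[where M = "3 * m" and d = e and l = lam] assms(1,2)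
    by (simp add: form0_def)
  have fibre: "card {p \<in> ?A. ?f p = r} = card {(i, j). i + j < n \<and> [form0 i j = 0] (mod 3 * m)}"
    if "r \<in> {0..<m}" for r
  proof -
    from that have "r mod m = r" by simp
    then have iff: "[L = 3 * r] (mod 3 * m) \<longleftrightarrow> 3 dvd L \<and> L div 3 mod m = r" for L
      using cong_mult_modulus_iff[of 3 L r m] by (simp add: cong_def)
    have "{p \<in> ?A. ?f p = r} = {(i, j). i + j < n \<and> [form0 i j = 3 * r] (mod 3 * m)}"
      unfolding iff by auto
    then show ?thesis
      using equidistributed[of "3 * r"] equidistributed[of 0] by simp
  qed
  have "(c + a2 * (y mod m)) mod m = (c + a2 * y) mod m" for y
    by (metis mod_add_right_eq mod_mult_right_eq)
  then have "{(i, j). i + j < n \<and> 3 dvd form0 i j \<and> (c + a2 * (form0 i j div 3)) mod m = x}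
      = {p \<in> ?A. (\<lambda>r. (c + a2 * r) mod m = x) (?f p)}"
    by auto
  then have "card {(i, j). i + j < n \<and> 3 dvd form0 i j \<and> (c + a2 * (form0 i j div 3)) mod m = x}
      = card {p \<in> ?A. (\<lambda>r. (c + a2 * r) mod m = x) (?f p)}"
    by (rule arg_cong)
  also have "\<dots> = card {(i, j). i + j < n \<and> [form0 i j = 0] (mod 3 * m)}
      * card {r \<in> {0..<m}. (c + a2 * r) mod m = x}"
  proof (rule card_filter_uniform_fibres[where f = ?f and P = "\<lambda>r. (c + a2 * r) mod m = x"])
    show "finite ?A"
      by (rule finite_triangle)
    show "?f ` ?A \<subseteq> {0..<m}"
      using assms(1) by auto
    show "finite {0..<m}"
      by simp
    show "card {p \<in> ?A. ?f p = r} = card {(i, j). i + j < n \<and> [form0 i j = 0] (mod 3 * m)}"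
      if "r \<in> {0..<m}" for r
      using that by (rule fibre)
  qed
  finally show ?thesis .
qed

lemma card_tri_closed_residue:
  fixes a1 a2 m x :: int and lam :: nat
  assumes "m > 0" and "odd m"
  defines "n \<equiv> 3 * lam * nat m"
  shows "card {(i, j). i + j < n \<and> tri_closed a1 a2 i j mod m = x}
       = card {(i, j). i + j < n \<and> [form0 i j = 0] (mod 3 * m)}
         * (card {r \<in> {0..<m}. (a1 + a2 * r) mod m = x} + card {r \<in> {0..<m}. (0 + a2 * r) mod m = x}
            + card {r \<in> {0..<m}. (- a1 + a2 * r) mod m = x})"
proof -
  define in_class where "in_class c L \<longleftrightarrow> 3 dvd L \<and> (c + a2 * (L div 3)) mod m = x" for c L :: int
  define C where "C c L = {(i, j). i + j < n \<and> in_class c (L i j)}" for c and L :: "nat \<Rightarrow> nat \<Rightarrow> int"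
  have "{(i, j). i + j < n \<and> tri_closed a1 a2 i j mod m = x} = C a1 form0 \<union> C 0 form1 \<union> C (- a1) form2"
    unfolding C_def in_class_def tri_closed_mod_eq_iff by auto
  moreover have "C a1 form0 \<inter> C 0 form1 = {}" "(C a1 form0 \<union> C 0 form1) \<inter> C (- a1) form2 = {}"
    unfolding C_def in_class_def by (auto simp: dvd_3_forms)
  moreover have "finite (C c L)" for c L
    unfolding C_def by (rule finite_triangle)
  ultimately have split: "card {(i, j). i + j < n \<and> tri_closed a1 a2 i j mod m = x}
      = card (C a1 form0) + card (C 0 form1) + card (C (- a1) form2)"
    by (simp add: card_Un_disjoint)
  have "int n = 3 * (int lam * m)"
    using assms(1) by (simp add: n_def)
  then have "in_class c (L + int n) = in_class c L" for c L
    unfolding in_class_def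
    using dvd_3_div_mod_shift[where L = L and t = "int lam" and m = m and c = c and a = a2 and x = x]
    by (simp only:)
  then have "card (C 0 form1) = card (C 0 form0)" "card (C (- a1) form2) = card (C (- a1) form0)"
    unfolding C_def by (intro card_triangle_form_rotate; blast)+
  moreover have "card (C c form0) = card {(i, j). i + j < n \<and> [form0 i j = 0] (mod 3 * m)}
      * card {r \<in> {0..<m}. (c + a2 * r) mod m = x}" for c
    unfolding C_def in_class_def n_def by (rule card_triangle_form0_class[OF assms(1,2)])
  ultimately show ?thesis
    using split by (simp add: algebra_simps)
qed

lemma card_residues_sum_eq_3:
  fixes a1 a2 m x :: int
  assumes "m > 0" and "gcd (gcd a1 a2) m = 1" and "gcd a2 m \<in> {1, 3}" and "0 \<le> x" and "x < m"
  shows "card {r \<in> {0..<m}. (a1 + a2 * r) mod m = x} + card {r \<in> {0..<m}. (0 + a2 * r) mod m = x}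
       + card {r \<in> {0..<m}. (- a1 + a2 * r) mod m = x} = 3"
proof -
  have count: "card {r \<in> {0..<m}. (c + a2 * r) mod m = x} = (if gcd a2 m dvd x - c then nat (gcd a2 m) else 0)" for c
  proof -
    have "(c + a2 * r) mod m = x \<longleftrightarrow> (c + a2 * r) mod m = x mod m" for r
      using assms(4,5) by simp
    also have "\<dots> r \<longleftrightarrow> [a2 * r = x - c] (mod m)" for r
      unfolding mod_eq_dvd_iff cong_iff_dvd_diff by (simp add: algebra_simps)
    finally have "(c + a2 * r) mod m = x \<longleftrightarrow> [a2 * r = x - c] (mod m)" for r .
    then show ?thesis
      using card_linear_cong_solutions[OF assms(1), of a2 "x - c"] by simp
  qed
  show ?thesis
  proof (cases "gcd a2 m = 1")
    case True
    then show ?thesis unfolding count by simp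
  next
    case False
    with assms(3) have "gcd a2 m = 3" by simp
    moreover have "\<not> 3 dvd a1"
    proof
      assume "3 dvd a1"
      with \<open>gcd a2 m = 3\<close> have "3 dvd gcd (gcd a1 a2) m"
        by (metis gcd_dvd1 gcd_dvd2 gcd_greatest)
      with assms(2) show False by simp
    qed
    ultimately show ?thesis
      unfolding count by presburger
  qed
qed

theorem theorem16:
  fixes a1 a2 m :: int and lam :: nat
  assumes "m > 0" and "odd m"
    and "gcd (gcd a1 a2) m = 1"
    and "gcd a2 m \<in> {1, 3}"
  shows "let A = (\<lambda>r. a1 * A1 r + a2 * A2 r)
         in balanced m (IAP (red m A) (timesX m (red m A))) (3 * lam * nat m)"
proof -
  define A where "A = (\<lambda>r. a1 * A1 r + a2 * A2 r)"
  define n where "n = 3 * lam * nat m"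
  define K where "K = card {(i, j). i + j < n \<and> [form0 i j = 0] (mod 3 * m)}"
  have "card {(i, j). i + j < n \<and> tri (IAP (red m A) (timesX m (red m A))) i j mod m = x} = K * 3"
    if "x \<in> {0..<m}" for x
  proof -
    have "tri (IAP (red m A) (timesX m (red m A))) i j mod m = tri_closed a1 a2 i j mod m" for i j
      using tri_IAP_cong_tri_closed[of m a1 a2 i j] unfolding A_def cong_def .
    then show ?thesis
      using card_tri_closed_residue[OF assms(1,2)] card_residues_sum_eq_3[OF assms(1,3,4)] that
      unfolding K_def n_def by simp
  qed
  then show ?thesis
    unfolding Let_def balanced_def A_def[symmetric] n_def[symmetric] by simp
qed

end
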